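(* Let $(\mathcal{M},g,\nabla,\nabla^* )$ be a dually flat manifold with $\nabla$-affine coordinates $\theta$, $\nabla^*$-affine coordinates $\eta$ and potentials $\psi,\varphi$. Let $\mathcal{S}\subset\mathcal{M}$ be an $m$-dimensional $\nabla$-auto-parallel submanifold, endowed with the induced dually flat structure, and let $(u_a)_{1\le a\le m}$ be $\nabla$-affine coordinates on $\mathcal{S}$. Fix $q\in\mathcal{M}\setminus\mathcal{S}$ and consider the $\nabla^*$-projection problem $\min_{p\in\mathcal{S}} D(p\|q)$, i.e. minimization of $f(u)=\psi(\theta(u))+\varphi(\eta^q)-\sum_{i=1}^n\theta_i(u)\eta^q_i$. Then, in the coordinates $u$, each iteration of the coordinate-based dual Riemannian Newton method applied to $f$ on $\mathcal{S}$ coincides with the iteration of the coordinate-based natural gradient method (with step size $s=1$); that is, both methods produce the update $u\gets u-\mathbf{G}(u)^{-1}\boldsymbol{\nabla}f(u)$.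
   Context: Dually flat manifold: a Riemannian manifold $(\mathcal{M},g)$ with torsion-free affine connections $\nabla,\nabla^*$ that are dual w.r.t. $g$ ($X\langle Y,Z\rangle=\langle\nabla_XY,Z\rangle+\langle Y,\nabla^*_XZ\rangle$) and whose curvature tensors both vanish. Coordinates are $\nabla$-affine if the Christoffel symbols of $\nabla$ vanish in them. On such a manifold there exist $\nabla$-affine coordinates $\theta$, $\nabla^*$-affine coordinates $\eta$ and smooth strictly convex potentials $\psi(\theta)$, $\varphi(\eta)$ with $\eta_i=\partial\psi/\partial\theta_i$, $\theta_i=\partial\varphi/\partial\eta_i$, $g_{ij}(\theta)=\partial^2\psi/\partial\theta_i\partial\theta_j$, $\psi(\theta)+\varphi(\eta)=\sum_i\theta_i\eta_i$. The $\nabla$-divergence is $D(p\|q)=\psi(\theta^p)+\varphi(\eta^q)-\sum_i\theta^p_i\eta^q_i$. A submanifold $\mathcal{S}$ is $\nabla$-auto-parallel if $\nabla_XY$ is tangent to $\mathcal{S}$ for all vector fields $X,Y$ tangent to $\mathcal{S}$; equivalently there are a constant rank-$m$ matrix $\mathbf{A}\in\mathbb{R}^{n\times m}$, a constant $\mathbf{b}\in\mathbb{R}^n$ and $\nabla$-affine coordinates $u$ on $\mathcal{S}$ with $\theta=\mathbf{A}u+\mathbf{b}$; with the induced metric, the restricted connection $\nabla$ and its dual, $\mathcal{S}$ is itself dually flat. For a manifold with dual connections $(\nabla,\nabla^* )$, a chart $\xi$, metric matrix $\mathbf{G}(\xi)$, coordinate gradient $\boldsymbol{\nabla}f(\xi)$,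 $a=\mathbf{G}^{-1}\boldsymbol{\nabla}f$, Christoffel symbols $\Gamma^k_{ij}$ of $\nabla$ and $\Gamma^{*}_{ij}{}^k$ of $\nabla^*$ (defined by $\nabla_{\partial_i}\partial_j=\sum_k\Gamma^k_{ij}\partial_k$, etc.), and $\mathbf{H}^*_{ij}=\partial a_j/\partial\xi_i+\sum_k a_k\Gamma^{*}_{ik}{}^j$: the coordinate-based dual Riemannian Newton method iterates: solve $\mathbf{H}^{*\top}(\xi)\boldsymbol{\beta}=-\mathbf{G}^{-1}(\xi)\boldsymbol{\nabla}f(\xi)$, then set $\xi_i\gets\xi_i+\beta_i-\tfrac12\sum_{j,k}\Gamma^i_{jk}(\xi)\beta_j\beta_k$. The coordinate-based natural gradient method with step size $s>0$ iterates $\xi\gets\xi-s\,\mathbf{G}^{-1}(\xi)\boldsymbol{\nabla}f(\xi)$. *)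

theory Defs
  imports "HOL-Analysis.Analysis"
begin

text \<open>Coordinates are Cartesian vectors: a point of an n-dimensional chart is a
  vector of type real^'n.  Partial derivatives are taken via the Frechet derivative.\<close>

definition pderiv :: "(real^'k \<Rightarrow> real) \<Rightarrow> 'k \<Rightarrow> real^'k \<Rightarrow> real" where
  "pderiv F i x = frechet_derivative F (at x) (axis i 1)"

text \<open>Iterated partial derivatives (innermost index last in the list).\<close>
fun ipd :: "'k list \<Rightarrow> (real^'k \<Rightarrow> real) \<Rightarrow> real^'k \<Rightarrow> real" where
  "ipd [] F = F"
| "ipd (i # is) F = pderiv (ipd is F) i"

definition smooth_on :: "(real^'k) set \<Rightarrow> (real^'k \<Rightarrow> real) \<Rightarrow> bool" where
  "smooth_on S F \<longleftrightarrow> (\<forall>is. \<forall>x\<in>S. ipd is F differentiable (at x))"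

definition coord_grad :: "(real^'k \<Rightarrow> real) \<Rightarrow> real^'k \<Rightarrow> real^'k" where
  "coord_grad F x = (\<chi> i. pderiv F i x)"

definition hess :: "(real^'k \<Rightarrow> real) \<Rightarrow> real^'k \<Rightarrow> real^'k^'k" where
  "hess F x = (\<chi> i j. pderiv (pderiv F j) i x)"

definition strictly_convex_on :: "(real^'k) set \<Rightarrow> (real^'k \<Rightarrow> real) \<Rightarrow> bool" where
  "strictly_convex_on S F \<longleftrightarrow>
     (\<forall>x\<in>S. \<forall>y\<in>S. \<forall>t. x \<noteq> y \<and> 0 < t \<and> t < 1 \<longrightarrow>
        F ((1 - t) *\<^sub>R x + t *\<^sub>R y) < (1 - t) * F x + t * F y)"

definition pos_def :: "real^'k^'k \<Rightarrow> bool" where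
  "pos_def M \<longleftrightarrow> (\<forall>v. v \<noteq> 0 \<longrightarrow> v \<bullet> (M *v v) > 0)"

text \<open>Coordinate-based dual Riemannian Newton method, for a chart with metric
  matrix G, coordinate gradient gradf, Christoffel symbols Gam of nabla
  (Gam x i j k = Gamma^k_{ij}) and GamD of nabla^* (GamD x i j k = Gamma^*_{ij}^k).\<close>

definition newton_a :: "(real^'k \<Rightarrow> real^'k^'k) \<Rightarrow> (real^'k \<Rightarrow> real^'k) \<Rightarrow> real^'k \<Rightarrow> real^'k" where
  "newton_a G gradf x = matrix_inv (G x) *v gradf x"

definition dual_newton_H ::
  "(real^'k \<Rightarrow> real^'k^'k) \<Rightarrow> (real^'k \<Rightarrow> real^'k) \<Rightarrow> (real^'k \<Rightarrow> 'k \<Rightarrow> 'k \<Rightarrow> 'k \<Rightarrow> real)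
    \<Rightarrow> real^'k \<Rightarrow> real^'k^'k" where
  "dual_newton_H G gradf GamD x =
     (\<chi> i j. pderiv (\<lambda>y. newton_a G gradf y $ j) i x
            + (\<Sum>k\<in>UNIV. newton_a G gradf x $ k * GamD x i k j))"

definition dual_newton_eq ::
  "(real^'k \<Rightarrow> real^'k^'k) \<Rightarrow> (real^'k \<Rightarrow> real^'k) \<Rightarrow> (real^'k \<Rightarrow> 'k \<Rightarrow> 'k \<Rightarrow> 'k \<Rightarrow> real)
    \<Rightarrow> real^'k \<Rightarrow> real^'k \<Rightarrow> bool" where
  "dual_newton_eq G gradf GamD x \<beta> \<longleftrightarrow>
     transpose (dual_newton_H G gradf GamD x) *v \<beta> = - (matrix_inv (G x) *v gradf x)"

definition dual_newton_update ::
  "(real^'k \<Rightarrow> 'k \<Rightarrow> 'k \<Rightarrow> 'k \<Rightarrow> real) \<Rightarrow> real^'k \<Rightarrow> real^'k \<Rightarrow> real^'k" where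
  "dual_newton_update Gam x \<beta> =
     (\<chi> i. x $ i + \<beta> $ i - 1/2 * (\<Sum>j\<in>UNIV. \<Sum>k\<in>UNIV. Gam x j k i * \<beta> $ j * \<beta> $ k))"

definition nat_grad_update ::
  "(real^'k \<Rightarrow> real^'k^'k) \<Rightarrow> (real^'k \<Rightarrow> real^'k) \<Rightarrow> real \<Rightarrow> real^'k \<Rightarrow> real^'k" where
  "nat_grad_update G gradf s x = x - s *\<^sub>R (matrix_inv (G x) *v gradf x)"

end

theory Submission
  imports Defs
begin

(* In the nabla-affine coordinates u the objective is f(u) = psi(A u + b) plus an affine function
   of u, so its coordinate Hessian is A^T (Hess psi) A, which is the induced metric G (Hess psi is
   symmetric by Schwarz's theorem).  On the other hand, differentiating d_j f = G_jk a_k with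
   a = G^-1 grad f and using the duality of nabla and nabla* shows that G H*^T is the Hessian of f
   corrected by Christoffel terms of nabla, which vanish.  Hence G H*^T = G, so H* = I, the Newton
   direction is beta = -G^-1 grad f, and the quadratic correction of the update vanishes: the dual
   Newton step is the natural gradient step with step size s = 1. *)

lemma sum_axis_mult: "(\<Sum>p\<in>UNIV. axis i 1 $ p * c p) = (c i :: real)"
proof -
  have "axis i 1 $ p * c p = (if p = i then c p else 0)" for p
    by (simp add: axis_def)
  then show ?thesis by simp
qed

lemma pderiv_eq:
  assumes "(F has_derivative F') (at x)"
  shows "pderiv F i x = F' (axis i 1)"
  unfolding pderiv_def using frechet_derivative_at[OF assms] by simp

lemma has_derivative_pderiv:
  fixes F :: "real^'k \<Rightarrow> real"
  assumes "F differentiable at x"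
  shows "(F has_derivative (\<lambda>h. \<Sum>p\<in>UNIV. h$p * pderiv F p x)) (at x)"
proof -
  let ?D = "frechet_derivative F (at x)"
  have D: "(F has_derivative ?D) (at x)"
    using assms frechet_derivative_works by blast
  have "?D = (\<lambda>h. \<Sum>p\<in>UNIV. h$p * pderiv F p x)"
  proof
    fix h
    have "?D h = ?D (\<Sum>p\<in>UNIV. h$p *\<^sub>R axis p 1)"
      using basis_expansion[of h] by (simp add: scalar_mult_eq_scaleR)
    also have "\<dots> = (\<Sum>p\<in>UNIV. h$p * pderiv F p x)"
      using has_derivative_linear[OF D] by (simp add: linear_sum linear_scale pderiv_def)
    finally show "?D h = (\<Sum>p\<in>UNIV. h$p * pderiv F p x)" .
  qed
  with D show ?thesis by simp
qed

lemma
  assumes "open S" "x \<in> S" "\<And>y. y \<in> S \<Longrightarrow> F y = F' y"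
  shows pderiv_cong_open: "pderiv F i x = pderiv F' i x"
    and differentiable_cong_open: "F differentiable at x \<longleftrightarrow> F' differentiable at x"
proof -
  have "(F has_derivative D) (at x) \<longleftrightarrow> (F' has_derivative D) (at x)" for D
    using has_derivative_transform_within_open[OF _ assms(1,2)] assms(3) by metis
  then show "pderiv F i x = pderiv F' i x" "F differentiable at x \<longleftrightarrow> F' differentiable at x"
    unfolding pderiv_def frechet_derivative_def differentiable_def by simp_all
qed

lemma pderiv_sum_mult:
  fixes X Y :: "'a \<Rightarrow> real^'k \<Rightarrow> real"
  assumes "finite K" "\<And>k. X k differentiable at x" "\<And>k. Y k differentiable at x"
  shows "pderiv (\<lambda>v. \<Sum>k\<in>K. X k v * Y k v) i x
       = (\<Sum>k\<in>K. pderiv (X k) i x * Y k x + X k x * pderiv (Y k) i x)"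
proof -
  have D: "((\<lambda>v. \<Sum>k\<in>K. X k v * Y k v) has_derivative
     (\<lambda>h. \<Sum>k\<in>K. X k x * (\<Sum>p\<in>UNIV. h$p * pderiv (Y k) p x)
                 + (\<Sum>p\<in>UNIV. h$p * pderiv (X k) p x) * Y k x)) (at x)"
    by (intro has_derivative_sum has_derivative_mult has_derivative_pderiv assms)
  show ?thesis
    using pderiv_eq[OF D] unfolding sum_axis_mult by (simp add: algebra_simps)
qed

lemma has_derivative_compose_affine:
  fixes F :: "real^'k \<Rightarrow> real" and A :: "real^'m^'k"
  assumes "(F has_derivative F') (at (A *v v + b))"
  shows "((\<lambda>v. F (A *v v + b)) has_derivative (\<lambda>h. F' (A *v h))) (at v)"
proof -
  have "((*v) A has_derivative (*v) A) (at v)"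
    by (rule bounded_linear_imp_has_derivative) simp
  then have "((\<lambda>v. A *v v + b) has_derivative (*v) A) (at v)"
    by (intro derivative_eq_intros) auto
  from diff_chain_at[OF this assms] show ?thesis by (simp add: o_def)
qed

lemma differentiable_compose_affine:
  fixes F :: "real^'k \<Rightarrow> real" and A :: "real^'m^'k"
  assumes "F differentiable at (A *v v + b)"
  shows "(\<lambda>v. F (A *v v + b)) differentiable at v"
  using assms has_derivative_compose_affine unfolding differentiable_def by blast

lemma pderiv_compose_affine:
  fixes F :: "real^'k \<Rightarrow> real" and A :: "real^'m^'k"
  assumes "F differentiable at (A *v v + b)"
  shows "pderiv (\<lambda>v. F (A *v v + b)) j v = (\<Sum>p\<in>UNIV. A$p$j * pderiv F p (A *v v + b))"
  using pderiv_eq[OF has_derivative_compose_affine[OF has_derivative_pderiv[OF assms]]]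
  by (simp add: matrix_vector_mult_basis column_def)

section \<open>Symmetry of second partial derivatives\<close>

lemma
  assumes "smooth_on S F" "y \<in> S"
  shows smooth_on_differentiable: "F differentiable at y"
    and smooth_on_differentiable_pderiv: "pderiv F p differentiable at y"
    and smooth_on_differentiable_pderiv2: "pderiv (pderiv F p) q differentiable at y"
  using assms unfolding smooth_on_def
  by (metis ipd.simps(1), metis ipd.simps, metis ipd.simps)

lemma has_real_derivative_pderiv_along_axis:
  fixes F :: "real^'k \<Rightarrow> real"
  assumes "F differentiable at (y + t *\<^sub>R axis p 1)"
  shows "((\<lambda>s. F (y + s *\<^sub>R axis p 1)) has_real_derivative pderiv F p (y + t *\<^sub>R axis p 1)) (at t)"
proof -
  have "((\<lambda>s. y + s *\<^sub>R axis p 1) has_derivative (\<lambda>s. s *\<^sub>R axis p 1)) (at t)"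
    by (intro derivative_eq_intros) auto
  note chain = diff_chain_at[OF this has_derivative_pderiv[OF assms]]
  have "(\<lambda>s. \<Sum>i\<in>UNIV. (s *\<^sub>R axis p 1) $ i * pderiv F i (y + t *\<^sub>R axis p 1))
      = (*) (pderiv F p (y + t *\<^sub>R axis p 1))"
  proof
    fix s
    show "(\<Sum>i\<in>UNIV. (s *\<^sub>R axis p 1) $ i * pderiv F i (y + t *\<^sub>R axis p 1))
        = pderiv F p (y + t *\<^sub>R axis p 1) * s"
      using sum_axis_mult[of p "\<lambda>i. s * pderiv F i (y + t *\<^sub>R axis p 1)"] by (simp add: mult_ac)
  qed
  with chain show ?thesis
    by (simp add: o_def has_field_derivative_def)
qed

lemma second_difference_mean_value:
  fixes F :: "real^'k \<Rightarrow> real"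
  defines "e i \<equiv> axis i (1::real)"
  assumes h: "0 < h"
    and box: "\<And>s t. 0 \<le> s \<Longrightarrow> s \<le> h \<Longrightarrow> 0 \<le> t \<Longrightarrow> t \<le> h \<Longrightarrow> x + s *\<^sub>R e p + t *\<^sub>R e q \<in> S"
    and dF: "\<And>y. y \<in> S \<Longrightarrow> F differentiable at y"
    and dFp: "\<And>y. y \<in> S \<Longrightarrow> pderiv F p differentiable at y"
  obtains s t where "0 < s" "s < h" "0 < t" "t < h"
    "F (x + h *\<^sub>R e p + h *\<^sub>R e q) - F (x + h *\<^sub>R e q) - F (x + h *\<^sub>R e p) + F x
       = h * h * pderiv (pderiv F p) q (x + s *\<^sub>R e p + t *\<^sub>R e q)"
proof -
  define g where "g s = F ((x + h *\<^sub>R e q) + s *\<^sub>R e p) - F (x + s *\<^sub>R e p)" for s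
  have "(g has_real_derivative pderiv F p ((x + h *\<^sub>R e q) + s *\<^sub>R e p) - pderiv F p (x + s *\<^sub>R e p)) (at s)"
    if "0 \<le> s" "s \<le> h" for s
    using box[of s h] box[of s 0] that h unfolding g_def e_def
    by (intro derivative_intros has_real_derivative_pderiv_along_axis dF) (simp_all add: add_ac)
  from MVT2[OF h this] obtain s where s: "0 < s" "s < h"
    and gs: "g h - g 0 = h * (pderiv F p ((x + h *\<^sub>R e q) + s *\<^sub>R e p) - pderiv F p (x + s *\<^sub>R e p))"
    by auto
  define k where "k t = pderiv F p ((x + s *\<^sub>R e p) + t *\<^sub>R e q)" for t
  have "(k has_real_derivative pderiv (pderiv F p) q ((x + s *\<^sub>R e p) + t *\<^sub>R e q)) (at t)"
    if "0 \<le> t" "t \<le> h" for t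
    using box[of s t] that s unfolding k_def e_def
    by (intro has_real_derivative_pderiv_along_axis dFp) simp
  from MVT2[OF h this] obtain t where t: "0 < t" "t < h"
    and kt: "k h - k 0 = h * pderiv (pderiv F p) q ((x + s *\<^sub>R e p) + t *\<^sub>R e q)"
    by auto
  have "g h - g 0 = h * (k h - k 0)"
    using gs unfolding k_def by (simp add: algebra_simps)
  also have "\<dots> = h * h * pderiv (pderiv F p) q (x + s *\<^sub>R e p + t *\<^sub>R e q)"
    using kt by simp
  finally show ?thesis
    using that[OF s t] unfolding g_def by (simp add: algebra_simps)
qed

lemma mixed_pderivs_agree_nearby:
  fixes F :: "real^'k \<Rightarrow> real"
  assumes "open S" "x \<in> S" "0 < \<epsilon>"
    and dF: "\<And>y. y \<in> S \<Longrightarrow> F differentiable at y"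
    and dFp: "\<And>y. y \<in> S \<Longrightarrow> pderiv F p differentiable at y"
    and dFq: "\<And>y. y \<in> S \<Longrightarrow> pderiv F q differentiable at y"
  obtains y z where "dist y x < \<epsilon>" "dist z x < \<epsilon>"
    "pderiv (pderiv F p) q y = pderiv (pderiv F q) p z"
proof -
  obtain r where r: "r > 0" "ball x r \<subseteq> S" using assms open_contains_ball by blast
  define h where "h = min r \<epsilon> / 3"
  have h: "h > 0" using r assms unfolding h_def by simp
  have near: "dist (x + s *\<^sub>R axis i 1 + t *\<^sub>R axis j 1) x < min r \<epsilon>"
    if "0 \<le> s" "s \<le> h" "0 \<le> t" "t \<le> h" for s t and i j :: 'k
  proof -
    have "dist (x + s *\<^sub>R axis i 1 + t *\<^sub>R axis j 1) x = norm (s *\<^sub>R axis i (1::real) + t *\<^sub>R axis j 1)"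
      by (simp add: dist_norm)
    also have "\<dots> \<le> norm (s *\<^sub>R axis i (1::real)) + norm (t *\<^sub>R axis j (1::real))"
      by (rule norm_triangle_ineq)
    also have "\<dots> < min r \<epsilon>" using that h unfolding h_def by simp
    finally show ?thesis .
  qed
  have box: "x + s *\<^sub>R axis i 1 + t *\<^sub>R axis j 1 \<in> S"
    if "0 \<le> s" "s \<le> h" "0 \<le> t" "t \<le> h" for s t and i j :: 'k
    using near[OF that, of i j] r by (auto simp: dist_commute)
  obtain s1 t1 where st1: "0 < s1" "s1 < h" "0 < t1" "t1 < h"
    and e1: "F (x + h *\<^sub>R axis p 1 + h *\<^sub>R axis q 1) - F (x + h *\<^sub>R axis q 1) - F (x + h *\<^sub>R axis p 1) + F x
       = h * h * pderiv (pderiv F p) q (x + s1 *\<^sub>R axis p 1 + t1 *\<^sub>R axis q 1)"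
    using second_difference_mean_value[OF h box dF dFp] by blast
  obtain s2 t2 where st2: "0 < s2" "s2 < h" "0 < t2" "t2 < h"
    and e2: "F (x + h *\<^sub>R axis q 1 + h *\<^sub>R axis p 1) - F (x + h *\<^sub>R axis p 1) - F (x + h *\<^sub>R axis q 1) + F x
       = h * h * pderiv (pderiv F q) p (x + s2 *\<^sub>R axis q 1 + t2 *\<^sub>R axis p 1)"
    using second_difference_mean_value[OF h box dF dFq] by blast
  have swap: "x + h *\<^sub>R axis q 1 + h *\<^sub>R axis p 1 = x + h *\<^sub>R axis p (1::real) + h *\<^sub>R axis q 1"
    by (simp add: algebra_simps)
  have "h * h * pderiv (pderiv F p) q (x + s1 *\<^sub>R axis p 1 + t1 *\<^sub>R axis q 1)
      = h * h * pderiv (pderiv F q) p (x + s2 *\<^sub>R axis q 1 + t2 *\<^sub>R axis p 1)"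
    using e1 e2 unfolding swap by linarith
  with h have "pderiv (pderiv F p) q (x + s1 *\<^sub>R axis p 1 + t1 *\<^sub>R axis q 1)
      = pderiv (pderiv F q) p (x + s2 *\<^sub>R axis q 1 + t2 *\<^sub>R axis p 1)"
    by simp
  with near[of s1 t1 p q] near[of s2 t2 q p] st1 st2 show ?thesis
    using that by (meson less_le min.strict_boundedE)
qed

lemma pderiv_pderiv_commute:
  fixes F :: "real^'k \<Rightarrow> real"
  assumes "open S" "x \<in> S"
    and "\<And>y. y \<in> S \<Longrightarrow> F differentiable at y"
    and "\<And>y. y \<in> S \<Longrightarrow> pderiv F p differentiable at y"
    and "\<And>y. y \<in> S \<Longrightarrow> pderiv F q differentiable at y"
    and cont_pq: "isCont (pderiv (pderiv F p) q) x"
    and cont_qp: "isCont (pderiv (pderiv F q) p) x"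
  shows "pderiv (pderiv F p) q x = pderiv (pderiv F q) p x"
proof (rule ccontr)
  let ?P = "pderiv (pderiv F p) q" and ?Q = "pderiv (pderiv F q) p"
  assume "?P x \<noteq> ?Q x"
  then have d: "\<bar>?P x - ?Q x\<bar> / 2 > 0" by simp
  obtain \<delta>1 where "\<delta>1 > 0" and \<delta>1: "\<And>y. dist y x < \<delta>1 \<Longrightarrow> dist (?P y) (?P x) < \<bar>?P x - ?Q x\<bar> / 2"
    using cont_pq[unfolded continuous_at_eps_delta] d by blast
  obtain \<delta>2 where "\<delta>2 > 0" and \<delta>2: "\<And>y. dist y x < \<delta>2 \<Longrightarrow> dist (?Q y) (?Q x) < \<bar>?P x - ?Q x\<bar> / 2"
    using cont_qp[unfolded continuous_at_eps_delta] d by blast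
  obtain y z where "dist y x < min \<delta>1 \<delta>2" "dist z x < min \<delta>1 \<delta>2" "?P y = ?Q z"
    using mixed_pderivs_agree_nearby[OF assms(1-2) _ assms(3-5)] \<open>\<delta>1 > 0\<close> \<open>\<delta>2 > 0\<close>
    by (metis min_less_iff_conj)
  with \<delta>1[of y] \<delta>2[of z] show False
    by (auto simp: dist_real_def abs_if split: if_splits)
qed

lemma smooth_on_hess_symmetric:
  assumes "open S" "smooth_on S F" "x \<in> S"
  shows "transpose (hess F x) = hess F x"
proof -
  have "pderiv (pderiv F p) q x = pderiv (pderiv F q) p x" for p q
    using assms
    by (intro pderiv_pderiv_commute[OF assms(1,3)] differentiable_imp_continuous_within
        smooth_on_differentiable smooth_on_differentiable_pderiv smooth_on_differentiable_pderiv2)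
  then show ?thesis by (simp add: transpose_def hess_def vec_eq_iff)
qed

section \<open>Affine changes of coordinates\<close>

lemma
  fixes F :: "real^'k \<Rightarrow> real"
  assumes "open S" "x \<in> S"
    and F_diff: "\<And>y. y \<in> S \<Longrightarrow> F differentiable at y"
    and pderiv_diff: "\<And>p. pderiv F p differentiable at x"
  shows hess_add_affine: "hess (\<lambda>y. F y + (d - y \<bullet> c)) x = hess F x"
    and differentiable_pderiv_add_affine: "pderiv (\<lambda>y. F y + (d - y \<bullet> c)) p differentiable at x"
proof -
  have pderiv_F0: "pderiv (\<lambda>y. F y + (d - y \<bullet> c)) p y = pderiv F p y - c $ p" if "y \<in> S" for p y
  proof -
    have "((\<lambda>y. F y + (d - y \<bullet> c)) has_derivative
          (\<lambda>h. (\<Sum>q\<in>UNIV. h$q * pderiv F q y) + (0 - h \<bullet> c))) (at y)"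
      by (intro has_derivative_add has_derivative_diff has_derivative_const has_derivative_pderiv
          F_diff that bounded_linear_imp_has_derivative bounded_linear_inner_left)
    from pderiv_eq[OF this] show ?thesis
      by (simp add: inner_axis' sum_axis_mult)
  qed
  have D: "(pderiv (\<lambda>y. F y + (d - y \<bullet> c)) p has_derivative
      (\<lambda>h. (\<Sum>q\<in>UNIV. h$q * pderiv (pderiv F p) q x) - 0)) (at x)" for p
  proof (rule has_derivative_transform_within_open[OF _ assms(1,2)])
    show "((\<lambda>y. pderiv F p y - c $ p) has_derivative
        (\<lambda>h. (\<Sum>q\<in>UNIV. h$q * pderiv (pderiv F p) q x) - 0)) (at x)"
      by (intro has_derivative_diff has_derivative_const has_derivative_pderiv pderiv_diff)
  qed (simp add: pderiv_F0)
  show "hess (\<lambda>y. F y + (d - y \<bullet> c)) x = hess F x"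
    using pderiv_eq[OF D] by (simp add: hess_def vec_eq_iff sum_axis_mult)
  show "pderiv (\<lambda>y. F y + (d - y \<bullet> c)) p differentiable at x"
    using D unfolding differentiable_def by blast
qed

lemma has_derivative_pderiv_compose_affine:
  fixes F :: "real^'n \<Rightarrow> real" and A :: "real^'m^'n"
  assumes "open U" "u \<in> U"
    and F_diff: "\<And>v. v \<in> U \<Longrightarrow> F differentiable at (A *v v + b)"
    and pderiv_diff: "\<And>p. pderiv F p differentiable at (A *v u + b)"
  shows "(pderiv (\<lambda>v. F (A *v v + b)) j has_derivative
          (\<lambda>h. \<Sum>p\<in>UNIV. A$p$j * (\<Sum>q\<in>UNIV. (A *v h)$q * pderiv (pderiv F p) q (A *v u + b)))) (at u)"
proof -
  have "((\<lambda>v. \<Sum>p\<in>UNIV. A$p$j * pderiv F p (A *v v + b)) has_derivative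
          (\<lambda>h. \<Sum>p\<in>UNIV. A$p$j * (\<Sum>q\<in>UNIV. (A *v h)$q * pderiv (pderiv F p) q (A *v u + b)))) (at u)"
    by (intro has_derivative_sum has_derivative_mult_right has_derivative_compose_affine
        has_derivative_pderiv pderiv_diff)
  then show ?thesis
    by (rule has_derivative_transform_within_open[OF _ assms(1,2)]) (simp add: pderiv_compose_affine F_diff)
qed

lemma hess_compose_affine:
  fixes F :: "real^'n \<Rightarrow> real" and A :: "real^'m^'n"
  assumes "open U" "u \<in> U"
    and "\<And>v. v \<in> U \<Longrightarrow> F differentiable at (A *v v + b)"
    and "\<And>p. pderiv F p differentiable at (A *v u + b)"
  shows "hess (\<lambda>v. F (A *v v + b)) u = transpose A ** hess F (A *v u + b) ** A"
  using pderiv_eq[OF has_derivative_pderiv_compose_affine[OF assms]]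
  by (simp add: hess_def vec_eq_iff matrix_matrix_mult_def transpose_def
      matrix_vector_mult_basis column_def sum_distrib_left sum_distrib_right mult_ac)

lemma
  fixes M :: "'a::semiring_1^'n^'m"
  assumes "invertible M"
  shows matrix_inv_right: "M ** matrix_inv M = mat 1"
    and matrix_inv_left: "matrix_inv M ** M = mat 1"
  using someI_ex[OF assms[unfolded invertible_def]] unfolding matrix_inv_def by auto

lemma invertible_congruence_pos_def:
  fixes A :: "real^'m^'n" and H :: "real^'n^'n"
  assumes "pos_def H" "inj ((*v) A)"
  shows "invertible (transpose A ** H ** A)"
proof -
  have "x = 0" if "(transpose A ** H ** A) *v x = 0" for x
  proof (rule ccontr)
    assume "x \<noteq> 0"
    then have "A *v x \<noteq> 0"
      using assms(2) by (metis inj_eq matrix_vector_mult_0_right)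
    then have "0 < (A *v x) \<bullet> (H *v (A *v x))"
      using assms(1) unfolding pos_def_def by blast
    also have "\<dots> = x \<bullet> ((H *v (A *v x)) v* A)"
      by (metis dot_lmul_matrix inner_commute)
    also have "\<dots> = x \<bullet> (transpose A *v (H *v (A *v x)))"
      by (simp only: transpose_matrix_vector)
    also have "\<dots> = x \<bullet> ((transpose A ** H ** A) *v x)"
      by (simp only: matrix_vector_mul_assoc matrix_mul_assoc)
    finally show False using that by simp
  qed
  then obtain B where "B ** (transpose A ** H ** A) = mat 1"
    using matrix_left_invertible_ker by blast
  then show ?thesis
    unfolding invertible_def using matrix_left_right_inverse by blast
qed

lemma differentiable_det:
  fixes M :: "real^'m \<Rightarrow> real^'k^'k"
  assumes "\<And>i j. (\<lambda>v. M v $ i $ j) differentiable at x"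
  shows "(\<lambda>v. det (M v)) differentiable at x"
proof -
  have "(\<lambda>v. \<Prod>i\<in>UNIV. M v $ i $ p i) differentiable at x" for p :: "'k \<Rightarrow> 'k"
  proof -
    obtain D where D: "\<And>i j. ((\<lambda>v. M v $ i $ j) has_derivative D i j) (at x)"
      using assms unfolding differentiable_def by metis
    show ?thesis
      unfolding differentiable_def by (rule exI, rule has_derivative_prod, rule D)
  qed
  then show ?thesis
    unfolding det_def by (intro differentiable_sum differentiable_mult differentiable_const) auto
qed

text \<open>By Cramer's rule each entry of the solution is a quotient of determinants.\<close>

lemma differentiable_matrix_inv_mult:
  fixes M :: "real^'m \<Rightarrow> real^'k^'k" and y :: "real^'m \<Rightarrow> real^'k"
  assumes "open U" "u \<in> U" "\<And>v. v \<in> U \<Longrightarrow> invertible (M v)"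
    and M_diff: "\<And>i j. (\<lambda>v. M v $ i $ j) differentiable at u"
    and y_diff: "\<And>i. (\<lambda>v. y v $ i) differentiable at u"
  shows "(\<lambda>v. (matrix_inv (M v) *v y v) $ k) differentiable at u"
proof -
  define C where "C k v = (\<chi> i j. if j = k then y v $ i else M v $ i $ j)" for k v
  have "(matrix_inv (M v) *v y v) $ k = det (C k v) / det (M v)" if "v \<in> U" for v
  proof -
    have "M v *v (matrix_inv (M v) *v y v) = y v"
      by (simp add: matrix_vector_mul_assoc matrix_inv_right assms(3)[OF that])
    then have "matrix_inv (M v) *v y v = (\<chi> k. det (C k v) / det (M v))"
      using cramer invertible_det_nz assms(3)[OF that] unfolding C_def by blast
    then show ?thesis by simp
  qed
  moreover have "(\<lambda>v. det (C k v) / det (M v)) differentiable at u"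
  proof (intro differentiable_divide differentiable_det)
    show "(\<lambda>v. C k v $ i $ j) differentiable at u" for i j
      unfolding C_def by (cases "j = k") (simp_all add: M_diff y_diff)
    show "det (M u) \<noteq> 0"
      using assms(2,3) invertible_det_nz by blast
  qed (rule M_diff)
  ultimately show ?thesis
    using differentiable_cong_open[OF assms(1,2), of "\<lambda>v. (matrix_inv (M v) *v y v) $ k"] by simp
qed

lemma invertible_matrix_mul_eq_self_iff:
  fixes M X :: "'a::field^'n^'n"
  assumes "invertible M"
  shows "M ** X = M \<longleftrightarrow> X = mat 1"
proof
  assume "M ** X = M"
  then have "(matrix_inv M ** M) ** X = matrix_inv M ** M"
    by (simp add: matrix_mul_assoc[symmetric])
  then show "X = mat 1"
    by (simp add: matrix_inv_left[OF assms])
qed simp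

section \<open>The dual Newton Hessian\<close>

text \<open>G H*^T is the coordinate expression of the Riemannian Hessian of f with respect
  to \<nabla>: its (j, i) entry is d_i d_j f - Gamma^l_ij d_l f.  Differentiating d_j f = G_jk a_k,
  the duality of \<nabla> and \<nabla>* turns the derivative of G into the Christoffel terms of H*.\<close>

lemma metric_mult_dual_newton_H:
  fixes G :: "real^'m \<Rightarrow> real^'m^'m" and f :: "real^'m \<Rightarrow> real"
    and Gam GamD :: "real^'m \<Rightarrow> 'm \<Rightarrow> 'm \<Rightarrow> 'm \<Rightarrow> real"
  defines "a \<equiv> newton_a G (coord_grad f)"
  assumes "open U" "u \<in> U" and G_inv: "\<And>v. v \<in> U \<Longrightarrow> invertible (G v)"
    and G_diff: "\<And>j k. (\<lambda>v. G v $ j $ k) differentiable at u"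
    and a_diff: "\<And>k. (\<lambda>v. a v $ k) differentiable at u"
    and dual: "\<And>i j k. pderiv (\<lambda>v. G v $ j $ k) i u
                 = (\<Sum>l\<in>UNIV. Gam u i j l * G u $ l $ k) + (\<Sum>l\<in>UNIV. GamD u i k l * G u $ j $ l)"
  shows "(G u ** transpose (dual_newton_H G (coord_grad f) GamD u)) $ j $ i
       = pderiv (pderiv f j) i u - (\<Sum>l\<in>UNIV. Gam u i j l * pderiv f l u)"
proof -
  have grad: "pderiv f j v = (\<Sum>k\<in>UNIV. G v $ j $ k * a v $ k)" if "v \<in> U" for v j
  proof -
    have "G v *v a v = coord_grad f v"
      unfolding a_def newton_a_def
      by (simp add: matrix_vector_mul_assoc matrix_inv_right G_inv[OF that])
    then show ?thesis
      by (simp add: vec_eq_iff matrix_vector_mult_def coord_grad_def)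
  qed
  have "pderiv (pderiv f j) i u = pderiv (\<lambda>v. \<Sum>k\<in>UNIV. G v $ j $ k * a v $ k) i u"
    by (rule pderiv_cong_open[OF assms(2,3)]) (rule grad)
  also have "\<dots> = (\<Sum>k\<in>UNIV. pderiv (\<lambda>v. G v $ j $ k) i u * a u $ k + G u $ j $ k * pderiv (\<lambda>v. a v $ k) i u)"
    by (rule pderiv_sum_mult) (auto intro: G_diff a_diff)
  also have "\<dots> = (\<Sum>l\<in>UNIV. Gam u i j l * (\<Sum>k\<in>UNIV. G u $ l $ k * a u $ k))
      + (\<Sum>l\<in>UNIV. G u $ j $ l * (\<Sum>k\<in>UNIV. a u $ k * GamD u i k l))
      + (\<Sum>l\<in>UNIV. G u $ j $ l * pderiv (\<lambda>v. a v $ l) i u)"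
  proof -
    have "(\<Sum>k\<in>UNIV. (\<Sum>l\<in>UNIV. Gam u i j l * G u $ l $ k) * a u $ k)
        = (\<Sum>l\<in>UNIV. Gam u i j l * (\<Sum>k\<in>UNIV. G u $ l $ k * a u $ k))"
      unfolding sum_distrib_left sum_distrib_right mult.assoc by (rule sum.swap)
    moreover have "(\<Sum>k\<in>UNIV. (\<Sum>l\<in>UNIV. GamD u i k l * G u $ j $ l) * a u $ k)
        = (\<Sum>l\<in>UNIV. G u $ j $ l * (\<Sum>k\<in>UNIV. a u $ k * GamD u i k l))"
      unfolding sum_distrib_left sum_distrib_right by (subst sum.swap) (simp add: mult_ac)
    ultimately show ?thesis
      unfolding dual by (simp add: sum.distrib distrib_right)
  qed
  also have "\<dots> = (\<Sum>l\<in>UNIV. Gam u i j l * pderiv f l u)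
      + (G u ** transpose (dual_newton_H G (coord_grad f) GamD u)) $ j $ i"
    using grad[OF assms(3)]
    by (simp add: a_def matrix_matrix_mult_def transpose_def dual_newton_H_def distrib_left sum.distrib)
  finally show ?thesis by simp
qed

lemma transpose_dual_newton_H_eq_mat_1:
  fixes G :: "real^'m \<Rightarrow> real^'m^'m" and f :: "real^'m \<Rightarrow> real"
    and Gam GamD :: "real^'m \<Rightarrow> 'm \<Rightarrow> 'm \<Rightarrow> 'm \<Rightarrow> real"
  assumes "open U" "u \<in> U" and G_inv: "\<And>v. v \<in> U \<Longrightarrow> invertible (G v)"
    and "\<And>j k. (\<lambda>v. G v $ j $ k) differentiable at u"
    and "\<And>k. (\<lambda>v. newton_a G (coord_grad f) v $ k) differentiable at u"
    and "\<And>i j k. pderiv (\<lambda>v. G v $ j $ k) i u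
                 = (\<Sum>l\<in>UNIV. Gam u i j l * G u $ l $ k) + (\<Sum>l\<in>UNIV. GamD u i k l * G u $ j $ l)"
    and affine: "\<forall>i j k. Gam u i j k = 0"
    and hess_eq: "hess f u = G u" and symmetric: "transpose (G u) = G u"
  shows "transpose (dual_newton_H G (coord_grad f) GamD u) = mat 1"
proof -
  let ?H = "dual_newton_H G (coord_grad f) GamD u"
  have "(G u ** transpose ?H) $ j $ i = G u $ j $ i" for i j
  proof -
    have "(G u ** transpose ?H) $ j $ i = pderiv (pderiv f j) i u"
      using metric_mult_dual_newton_H[where f = f and Gam = Gam and GamD = GamD, OF assms(1-6)] affine
      by simp
    also have "\<dots> = transpose (hess f u) $ j $ i"
      by (simp add: hess_def transpose_def)
    finally show ?thesis
      using hess_eq symmetric by simp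
  qed
  then have "G u ** transpose ?H = G u"
    by (simp add: vec_eq_iff)
  then show ?thesis
    using invertible_matrix_mul_eq_self_iff[OF G_inv[OF assms(2)]] by simp
qed

lemma dual_newton_step_eq_nat_grad_step:
  assumes "transpose (dual_newton_H G gradf GamD u) = mat 1" "\<forall>i j k. Gam u i j k = 0"
  shows "(\<exists>!\<beta>. dual_newton_eq G gradf GamD u \<beta>) \<and>
         (\<forall>\<beta>. dual_newton_eq G gradf GamD u \<beta> \<longrightarrow>
              dual_newton_update Gam u \<beta> = nat_grad_update G gradf 1 u \<and>
              nat_grad_update G gradf 1 u = u - matrix_inv (G u) *v gradf u)"
proof -
  have newton_eq: "dual_newton_eq G gradf GamD u \<beta> \<longleftrightarrow> \<beta> = - (matrix_inv (G u) *v gradf u)" for \<beta>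
    unfolding dual_newton_eq_def assms(1) by simp
  have "dual_newton_update Gam u (- (matrix_inv (G u) *v gradf u)) = nat_grad_update G gradf 1 u"
    using assms(2) by (simp add: dual_newton_update_def nat_grad_update_def vec_eq_iff)
  then show ?thesis
    unfolding newton_eq by (simp add: nat_grad_update_def)
qed

section \<open>The divergence along an affine family\<close>

lemma differentiable_congruence_hess:
  fixes \<psi> :: "real^'n \<Rightarrow> real" and A :: "real^'m^'n"
  assumes "smooth_on \<Theta> \<psi>" "A *v u + b \<in> \<Theta>"
  shows "(\<lambda>v. (transpose A ** hess \<psi> (A *v v + b) ** A) $ j $ k) differentiable at u"
proof -
  have "(\<lambda>v. pderiv (pderiv \<psi> p) q (A *v v + b)) differentiable at u" for p q
    by (rule differentiable_compose_affine) (rule smooth_on_differentiable_pderiv2[OF assms])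
  then show ?thesis
    unfolding matrix_matrix_mult_def transpose_def hess_def
    by (simp add: differentiable_sum differentiable_mult)
qed

lemma
  fixes \<psi> :: "real^'n \<Rightarrow> real" and A :: "real^'m^'n" and c :: "real^'n" and d :: real
  assumes "open \<Theta>" "smooth_on \<Theta> \<psi>" "open U" "u \<in> U" "\<And>v. v \<in> U \<Longrightarrow> A *v v + b \<in> \<Theta>"
  defines "f \<equiv> \<lambda>v. \<psi> (A *v v + b) + (d - (A *v v + b) \<bullet> c)"
  shows hess_divergence_affine: "hess f u = transpose A ** hess \<psi> (A *v u + b) ** A"
    and differentiable_grad_divergence_affine: "(\<lambda>v. coord_grad f v $ j) differentiable at u"
proof -
  let ?F = "\<lambda>\<theta>. \<psi> \<theta> + (d - \<theta> \<bullet> c)"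
  have \<psi>_diff: "\<And>\<theta>. \<theta> \<in> \<Theta> \<Longrightarrow> \<psi> differentiable at \<theta>"
    using assms(2) smooth_on_differentiable by blast
  have F_diff: "?F differentiable at (A *v v + b)" if "v \<in> U" for v
    using \<psi>_diff assms(5)[OF that] by simp
  have pderiv_F_diff: "pderiv ?F p differentiable at (A *v u + b)" for p
    using differentiable_pderiv_add_affine[where F = \<psi>, OF assms(1) assms(5)[OF assms(4)] \<psi>_diff
      smooth_on_differentiable_pderiv[OF assms(2) assms(5)[OF assms(4)]]] .
  show "hess f u = transpose A ** hess \<psi> (A *v u + b) ** A"
    unfolding f_def
    using hess_compose_affine[OF assms(3,4) F_diff pderiv_F_diff]
      hess_add_affine[OF assms(1) assms(5)[OF assms(4)] \<psi>_diff
        smooth_on_differentiable_pderiv[OF assms(2) assms(5)[OF assms(4)]]] by simp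
  show "(\<lambda>v. coord_grad f v $ j) differentiable at u"
    using has_derivative_pderiv_compose_affine[OF assms(3,4) F_diff pderiv_F_diff]
    unfolding f_def coord_grad_def differentiable_def by auto
qed

theorem theorem2:
  fixes \<Theta> :: "(real^'n) set" and \<psi> :: "real^'n \<Rightarrow> real" and \<phi> :: "real^'n \<Rightarrow> real"
    and A :: "real^'m^'n" and b :: "real^'n" and U :: "(real^'m) set"
    and \<theta>q :: "real^'n"
    and Gam GamD :: "real^'m \<Rightarrow> 'm \<Rightarrow> 'm \<Rightarrow> 'm \<Rightarrow> real"
    and f :: "real^'m \<Rightarrow> real" and G :: "real^'m \<Rightarrow> real^'m^'m"
  assumes open_Theta: "open \<Theta>"
    and psi_smooth: "smooth_on \<Theta> \<psi>"
    and psi_strict_convex: "strictly_convex_on \<Theta> \<psi>"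
    and metric_pos: "\<forall>\<theta>\<in>\<Theta>. pos_def (hess \<psi> \<theta>)"
    and legendre: "\<forall>\<theta>\<in>\<Theta>. \<psi> \<theta> + \<phi> (coord_grad \<psi> \<theta>)
                        = (\<Sum>i\<in>UNIV. \<theta> $ i * coord_grad \<psi> \<theta> $ i)"
    and rankA: "rank A = CARD('m)"
    and open_U: "open U"
    and S_in: "\<forall>u\<in>U. A *v u + b \<in> \<Theta>"
    and q_in: "\<theta>q \<in> \<Theta>"
    and q_notin_S: "\<theta>q \<notin> (\<lambda>u. A *v u + b) ` U"
    and f_def: "\<forall>u. f u = \<psi> (A *v u + b) + \<phi> (coord_grad \<psi> \<theta>q)
                       - (\<Sum>i\<in>UNIV. (A *v u + b) $ i * coord_grad \<psi> \<theta>q $ i)"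
    and G_def: "\<forall>u. G u = transpose A ** hess \<psi> (A *v u + b) ** A"
    and u_affine: "\<forall>u\<in>U. \<forall>i j k. Gam u i j k = 0"
    and dual: "\<forall>u\<in>U. \<forall>i j k. pderiv (\<lambda>v. G v $ j $ k) i u
                 = (\<Sum>l\<in>UNIV. Gam u i j l * G u $ l $ k) + (\<Sum>l\<in>UNIV. GamD u i k l * G u $ j $ l)"
  shows "\<forall>u\<in>U.
           (\<exists>!\<beta>. dual_newton_eq G (coord_grad f) GamD u \<beta>) \<and>
           (\<forall>\<beta>. dual_newton_eq G (coord_grad f) GamD u \<beta> \<longrightarrow>
                 dual_newton_update Gam u \<beta> = nat_grad_update G (coord_grad f) 1 u \<and>
                 nat_grad_update G (coord_grad f) 1 u = u - matrix_inv (G u) *v coord_grad f u)"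
proof -
  have G_eq: "G = (\<lambda>v. transpose A ** hess \<psi> (A *v v + b) ** A)"
    using G_def by auto
  have f_eq: "f = (\<lambda>v. \<psi> (A *v v + b) + (\<phi> (coord_grad \<psi> \<theta>q) - (A *v v + b) \<bullet> coord_grad \<psi> \<theta>q))"
    using f_def by (simp add: fun_eq_iff inner_vec_def)
  have G_inv: "invertible (G v)" if "v \<in> U" for v
    unfolding G_eq using metric_pos S_in that rankA
    by (simp add: invertible_congruence_pos_def full_rank_injective)
  have "transpose (dual_newton_H G (coord_grad f) GamD u) = mat 1" if u: "u \<in> U" for u
  proof (rule transpose_dual_newton_H_eq_mat_1[OF open_U u G_inv])
    show G_diff: "(\<lambda>v. G v $ j $ k) differentiable at u" for j k
      unfolding G_eq using S_in u by (intro differentiable_congruence_hess[OF psi_smooth]) simp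
    show "(\<lambda>v. newton_a G (coord_grad f) v $ k) differentiable at u" for k
      unfolding newton_a_def f_eq using S_in
      by (intro differentiable_matrix_inv_mult[OF open_U u G_inv G_diff]
          differentiable_grad_divergence_affine[OF open_Theta psi_smooth open_U u]) auto
    show "hess f u = G u"
      unfolding f_eq G_eq using S_in
      by (intro hess_divergence_affine[OF open_Theta psi_smooth open_U u]) simp
    show "transpose (G u) = G u"
      using smooth_on_hess_symmetric[OF open_Theta psi_smooth] S_in u
      unfolding G_eq by (simp add: matrix_transpose_mul matrix_mul_assoc)
  qed (use dual u_affine u in auto)
  then show ?thesis
    using dual_newton_step_eq_nat_grad_step u_affine by blast
qed

end
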